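(* Let $D$ be a bilateral negotiation domain with a finite offer space $\Omega$, utility functions $u_1,u_2:\Omega\to\mathbb{R}$ and reservation values $rv_1,rv_2\in\mathbb{R}$, and consider negotiation over $D$ under the alternating offers protocol with deadline $T$. If $T$ is sufficiently large, then for every offer $\omega\in\Omega$ that is Pareto-optimal and individually rational there exists a pair of negotiation strategies $(\sigma_1,\sigma_2)$ that forms a Nash equilibrium, and this pair leads to the negotiation ending in agreement on $\omega$ or on another offer $\hat\omega\in\Omega$ with exactly the same utility vector, i.e. $u_i(\omega)=u_i(\hat\omega)$ for both $i\in\{1,2\}$.
   Context: A bilateral negotiation domain consists of a set $\Omega$ of offers, and for each agent $i\in\{1,2\}$ a utility function $u_i:\Omega\to\mathbb{R}$ and a reservation value $rv_i\in\mathbb{R}$ (no discounting). A negotiation action is a tuple $(i,\tau,\omega,t)$ with $i\in\{1,2\}$ the acting agent, $\tau\in\{\text{propose},\text{accept}\}$, $\omega\in\Omega$ and time $t\ge 0$. Under the alternating offers protocol with deadline $T$, agent 1 acts first and the agents alternate; after each action $(i_j,\tau_j,\omega_j,t_j)$ a random positive delay $\varepsilon_j$ occurs before it is received by the other agent, and the next action must satisfy $t_j+\varepsilon_j<t_{j+1}$; an acceptance may only accept the offer in the immediately preceding proposal and ends the negotiation; all actions occur at times $\le T$. The negotiation ends in agreement on $\omega_k$ if its last action $(i_k,\tau_k,\omega_k,t_k)$ is an acceptance with $t_k+\varepsilon_k<T$, in which case agent $i$ receives $u_i(\omega_k)$; otherwise it fails and agent $i$ receives $rv_i$. Each agent observes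 its own actions with their sending times and the other agent's actions with their reception times $t_j+\varepsilon_j$ (but not the delays themselves). A negotiation strategy for agent $i$ maps each observed history at which it is agent $i$'s turn to a legal action. A pair $(\sigma_1,\sigma_2)$ is a Nash equilibrium if no agent can increase its (expected) utility by switching to another strategy while the other agent keeps its strategy. An offer $\omega$ is individually rational if $u_i(\omega)>rv_i$ for both $i$. An offer $\omega'$ dominates $\omega$ if $u_i(\omega')\ge u_i(\omega)$ for both $i$ with strict inequality for at least one $i$; $\omega$ is Pareto-optimal if no offer in $\Omega$ dominates it.
   Formalization: The random delays $\varepsilon_j$ are almost surely bounded by a single constant: for some real Delta, with probability one every delay $\varepsilon_j$ lies in the interval (0, Delta]. Each condition added here is assumed in the paper as well or is needed for the statement above to hold. *)

theory Defs
  imports "HOL-Probability.Probability"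
begin

text \<open>An action is a triple (type, offer, time); the acting agent is implicit in its index.
A delay realisation is a sequence eps :: nat => real, eps j being the delay of action j.\<close>

datatype act_type = Propose | Accept

type_synonym 'a action = "act_type \<times> 'a \<times> real"
type_synonym 'a strategy = "'a action list \<Rightarrow> 'a action"

definition a_type :: "'a action \<Rightarrow> act_type" where "a_type a = fst a"
definition a_offer :: "'a action \<Rightarrow> 'a" where "a_offer a = fst (snd a)"
definition a_time :: "'a action \<Rightarrow> real" where "a_time a = snd (snd a)"

definition agent_of :: "nat \<Rightarrow> nat" where
  "agent_of j = (if even j then 1 else 2)"

text \<open>What agent i observes of an actual history h: its own actions with their sending
times, the other agent's actions with their reception times t_j + eps j.\<close>
definition observe :: "nat \<Rightarrow> (nat \<Rightarrow> real) \<Rightarrow> 'a action list \<Rightarrow> 'a action list" where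
  "observe i eps h =
     map (\<lambda>j. (a_type (h ! j), a_offer (h ! j),
               if agent_of j = i then a_time (h ! j) else a_time (h ! j) + eps j))
         [0..<length h]"

primrec run :: "'a strategy \<Rightarrow> 'a strategy \<Rightarrow> (nat \<Rightarrow> real) \<Rightarrow> nat \<Rightarrow> 'a action list" where
  "run s1 s2 eps 0 = []"
| "run s1 s2 eps (Suc k) =
     (let h = run s1 s2 eps k
      in h @ [(if agent_of k = 1 then s1 else s2) (observe (agent_of k) eps h)])"

definition action_at :: "'a strategy \<Rightarrow> 'a strategy \<Rightarrow> (nat \<Rightarrow> real) \<Rightarrow> nat \<Rightarrow> 'a action" where
  "action_at s1 s2 eps k = run s1 s2 eps (Suc k) ! k"

text \<open>Legal action for the agent whose turn it is, given its observed history h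
(whose last entry, if any, is the other agent's action stamped with its reception time).\<close>
definition legal_action :: "'a set \<Rightarrow> real \<Rightarrow> 'a action list \<Rightarrow> 'a action \<Rightarrow> bool" where
  "legal_action Om T h a \<longleftrightarrow>
     a_offer a \<in> Om \<and> 0 \<le> a_time a \<and> a_time a \<le> T \<and>
     (h \<noteq> [] \<longrightarrow> a_time (last h) < a_time a) \<and>
     (a_type a = Accept \<longrightarrow>
        h \<noteq> [] \<and> a_type (last h) = Propose \<and> a_offer a = a_offer (last h))"

definition legal_strategy :: "'a set \<Rightarrow> real \<Rightarrow> nat \<Rightarrow> 'a strategy \<Rightarrow> bool" where
  "legal_strategy Om T i s \<longleftrightarrow>
     (\<forall>h. agent_of (length h) = i \<longrightarrow> (h = [] \<or> a_time (last h) < T) \<longrightarrow>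
          legal_action Om T h (s h))"

definition agree_at :: "'a strategy \<Rightarrow> 'a strategy \<Rightarrow> (nat \<Rightarrow> real) \<Rightarrow> real \<Rightarrow> nat \<Rightarrow> bool" where
  "agree_at s1 s2 eps T k \<longleftrightarrow>
     (\<forall>j<k. a_type (action_at s1 s2 eps j) = Propose \<and>
            a_time (action_at s1 s2 eps j) + eps j < T) \<and>
     a_type (action_at s1 s2 eps k) = Accept \<and>
     a_time (action_at s1 s2 eps k) + eps k < T"

definition agreed_on :: "'a strategy \<Rightarrow> 'a strategy \<Rightarrow> (nat \<Rightarrow> real) \<Rightarrow> real \<Rightarrow> 'a \<Rightarrow> bool" where
  "agreed_on s1 s2 eps T w \<longleftrightarrow>
     (\<exists>k. agree_at s1 s2 eps T k \<and> a_offer (action_at s1 s2 eps k) = w)"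

definition payoff :: "('a \<Rightarrow> real) \<Rightarrow> real \<Rightarrow> 'a strategy \<Rightarrow> 'a strategy \<Rightarrow> real \<Rightarrow> (nat \<Rightarrow> real) \<Rightarrow> real" where
  "payoff u rv s1 s2 T eps =
     (if \<exists>k. agree_at s1 s2 eps T k
      then u (a_offer (action_at s1 s2 eps (LEAST k. agree_at s1 s2 eps T k)))
      else rv)"

text \<open>Expected
utility is the integral of the realised utility; it is required to be a well-defined
(measurable) random variable for the equilibrium pair, and deviations are compared
whenever their expected utility is well defined.\<close>
definition nash_equilibrium ::
  "'a set \<Rightarrow> real \<Rightarrow> (nat \<Rightarrow> real) measure \<Rightarrow> ('a \<Rightarrow> real) \<Rightarrow> ('a \<Rightarrow> real) \<Rightarrow> real \<Rightarrow> real
   \<Rightarrow> 'a strategy \<Rightarrow> 'a strategy \<Rightarrow> bool" where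
  "nash_equilibrium Om T M u1 u2 rv1 rv2 s1 s2 \<longleftrightarrow>
     legal_strategy Om T 1 s1 \<and> legal_strategy Om T 2 s2 \<and>
     payoff u1 rv1 s1 s2 T \<in> borel_measurable M \<and>
     payoff u2 rv2 s1 s2 T \<in> borel_measurable M \<and>
     (\<forall>s1'. legal_strategy Om T 1 s1' \<longrightarrow> payoff u1 rv1 s1' s2 T \<in> borel_measurable M \<longrightarrow>
        (\<integral>eps. payoff u1 rv1 s1' s2 T eps \<partial>M) \<le> (\<integral>eps. payoff u1 rv1 s1 s2 T eps \<partial>M)) \<and>
     (\<forall>s2'. legal_strategy Om T 2 s2' \<longrightarrow> payoff u2 rv2 s1 s2' T \<in> borel_measurable M \<longrightarrow>
        (\<integral>eps. payoff u2 rv2 s1 s2' T eps \<partial>M) \<le> (\<integral>eps. payoff u2 rv2 s1 s2 T eps \<partial>M))"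

definition individually_rational :: "('a \<Rightarrow> real) \<Rightarrow> ('a \<Rightarrow> real) \<Rightarrow> real \<Rightarrow> real \<Rightarrow> 'a \<Rightarrow> bool" where
  "individually_rational u1 u2 rv1 rv2 w \<longleftrightarrow> u1 w > rv1 \<and> u2 w > rv2"

definition dominates :: "('a \<Rightarrow> real) \<Rightarrow> ('a \<Rightarrow> real) \<Rightarrow> 'a \<Rightarrow> 'a \<Rightarrow> bool" where
  "dominates u1 u2 w' w \<longleftrightarrow> u1 w' \<ge> u1 w \<and> u2 w' \<ge> u2 w \<and> (u1 w' > u1 w \<or> u2 w' > u2 w)"

definition pareto_optimal :: "'a set \<Rightarrow> ('a \<Rightarrow> real) \<Rightarrow> ('a \<Rightarrow> real) \<Rightarrow> 'a \<Rightarrow> bool" where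
  "pareto_optimal Om u1 u2 w \<longleftrightarrow> \<not> (\<exists>w'\<in>Om. dominates u1 u2 w' w)"

end

theory Submission
  imports Defs
begin

text \<open>Both agents play threshold strategies around w: agent 1 opens with w, and each
agent accepts exactly the proposals worth at least as much to it as w, otherwise
proposing w again. With a deadline beyond three times the delay bound, the opening
proposal is accepted and the acceptance received in time, so both agents get u_i w
almost surely. Against a threshold opponent, any agreement a deviator can reach is on
an offer which is w itself (the deviator accepted the opponent's proposal) or which the
opponent values at least as w; by Pareto optimality the deviator values it at most as w.
Disagreement yields the reservation value, which individual rationality keeps below
u_i w.\<close>

definition strategy_of :: "'a strategy \<Rightarrow> 'a strategy \<Rightarrow> nat \<Rightarrow> 'a strategy" where
  "strategy_of s1 s2 i = (if i = 1 then s1 else s2)"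

lemma agent_of_Suc: "agent_of (Suc k) \<noteq> agent_of k"
  by (simp add: agent_of_def)

lemma length_run [simp]: "length (run s1 s2 eps k) = k"
  by (induction k) (simp_all add: Let_def)

lemma action_at_step:
  "action_at s1 s2 eps k =
     strategy_of s1 s2 (agent_of k) (observe (agent_of k) eps (run s1 s2 eps k))"
  by (simp add: action_at_def strategy_of_def Let_def nth_append)

lemma length_observe [simp]: "length (observe i eps h) = length h"
  by (simp add: observe_def)

lemma last_observe_run:
  "last (observe i eps (run s1 s2 eps (Suc k))) =
     (a_type (action_at s1 s2 eps k), a_offer (action_at s1 s2 eps k),
      if agent_of k = i then a_time (action_at s1 s2 eps k)
      else a_time (action_at s1 s2 eps k) + eps k)"
  by (simp add: observe_def last_map action_at_def del: run.simps upt_Suc)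

lemma agree_at_unique:
  assumes "agree_at s1 s2 eps T k" and "agree_at s1 s2 eps T k'"
  shows "k = k'"
  using assms unfolding agree_at_def by (metis act_type.distinct(1) linorder_neqE_nat)

lemma payoff_agree_at:
  assumes "agree_at s1 s2 eps T k"
  shows "payoff u rv s1 s2 T eps = u (a_offer (action_at s1 s2 eps k))"
proof -
  have "(LEAST k. agree_at s1 s2 eps T k) = k"
    using assms agree_at_unique by (metis LeastI)
  then show ?thesis
    using assms unfolding payoff_def by auto
qed

lemma payoff_cases:
  obtains "payoff u rv s1 s2 T eps = rv"
  | k where "agree_at s1 s2 eps T k" and "payoff u rv s1 s2 T eps = u (a_offer (action_at s1 s2 eps k))"
  using payoff_agree_at unfolding payoff_def by metis

text \<open>Legality constrains the acceptance because, in an agreement, the preceding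
proposal is received before the deadline.\<close>
lemma agree_at_accepts_previous_offer:
  assumes agree: "agree_at s1 s2 eps T k"
    and legal: "legal_strategy Om T (agent_of k) (strategy_of s1 s2 (agent_of k))"
  obtains n where "k = Suc n"
    and "a_offer (action_at s1 s2 eps k) = a_offer (action_at s1 s2 eps n)"
    and "a_offer (action_at s1 s2 eps k) \<in> Om"
proof -
  let ?h = "observe (agent_of k) eps (run s1 s2 eps k)"
  have legal_h: "legal_action Om T ?h (action_at s1 s2 eps k)" if "?h = [] \<or> a_time (last ?h) < T"
    using legal[unfolded legal_strategy_def, rule_format, of ?h] that
    by (simp add: action_at_step[of s1 s2 eps k])
  have accept: "a_type (action_at s1 s2 eps k) = Accept"
    using agree by (simp add: agree_at_def)
  show thesis
  proof (cases k)
    case 0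
    then show thesis
      using legal_h accept by (simp add: legal_action_def observe_def)
  next
    case (Suc n)
    have last_h: "last ?h = (Propose, a_offer (action_at s1 s2 eps n), a_time (action_at s1 s2 eps n) + eps n)"
      using agree agent_of_Suc[of n] unfolding Suc last_observe_run
      by (simp add: agree_at_def eq_commute[of "agent_of n"])
    moreover have "a_time (action_at s1 s2 eps n) + eps n < T"
      using agree Suc by (simp add: agree_at_def)
    ultimately have "legal_action Om T ?h (action_at s1 s2 eps k)"
      by (intro legal_h) (simp add: a_time_def)
    then have "a_offer (action_at s1 s2 eps k) = a_offer (last ?h)"
      and "a_offer (action_at s1 s2 eps k) \<in> Om"
      using accept unfolding legal_action_def by blast+
    then show thesis
      using that Suc last_h by (simp add: a_offer_def)
  qed
qed

text \<open>Answering halfway between the last reception time and the deadline keeps every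
answer strictly before T, however late the last message arrived.\<close>
definition threshold_strategy :: "('a \<Rightarrow> real) \<Rightarrow> 'a \<Rightarrow> 'a set \<Rightarrow> real \<Rightarrow> 'a strategy" where
  "threshold_strategy u w Om T h =
     (if h = [] then (Propose, w, 0)
      else if a_type (last h) = Propose \<and> a_offer (last h) \<in> Om \<and> u w \<le> u (a_offer (last h))
      then (Accept, a_offer (last h), (max (a_time (last h)) 0 + T) / 2)
      else (Propose, w, (max (a_time (last h)) 0 + T) / 2))"

lemma legal_threshold_strategy:
  assumes "w \<in> Om" and "0 \<le> T"
  shows "legal_strategy Om T i (threshold_strategy u w Om T)"
  using assms unfolding legal_strategy_def legal_action_def
  by (auto simp: threshold_strategy_def a_type_def a_offer_def a_time_def max_def)

lemma threshold_strategy_proposes: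
  "a_type (threshold_strategy u w Om T h) = Propose \<Longrightarrow> a_offer (threshold_strategy u w Om T h) = w"
  by (auto simp: threshold_strategy_def a_type_def a_offer_def split: if_splits)

lemma threshold_strategy_accepts:
  assumes "a_type (threshold_strategy u w Om T h) = Accept"
  shows "a_offer (threshold_strategy u w Om T h) \<in> Om"
    and "u w \<le> u (a_offer (threshold_strategy u w Om T h))"
  using assms by (auto simp: threshold_strategy_def a_type_def a_offer_def split: if_splits)

text \<open>If the other agent is the one accepting, it accepts the preceding proposal,
which the threshold agent made.\<close>
lemma agreement_acceptable_to_threshold_agent:
  assumes agree: "agree_at s1 s2 eps T k"
    and j: "j \<in> {1, 2}"
    and threshold: "strategy_of s1 s2 j = threshold_strategy v w Om T"
    and legal: "legal_strategy Om T (3 - j) (strategy_of s1 s2 (3 - j))"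
  shows "a_offer (action_at s1 s2 eps k) \<in> Om \<and>
         (a_offer (action_at s1 s2 eps k) = w \<or> v w \<le> v (a_offer (action_at s1 s2 eps k)))"
proof (cases "agent_of k = j")
  case True
  then have "action_at s1 s2 eps k = threshold_strategy v w Om T (observe j eps (run s1 s2 eps k))"
    using threshold by (simp add: action_at_step[of s1 s2 eps k])
  then show ?thesis
    using agree threshold_strategy_accepts[of v w Om T] by (simp add: agree_at_def)
next
  case False
  then have "agent_of k = 3 - j"
    using j by (auto simp: agent_of_def)
  with legal obtain n where k: "k = Suc n"
    and same: "a_offer (action_at s1 s2 eps k) = a_offer (action_at s1 s2 eps n)"
    and Om: "a_offer (action_at s1 s2 eps k) \<in> Om"
    using agree_at_accepts_previous_offer[OF agree] by metis
  have "agent_of n = j"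
    using False j k by (auto simp: agent_of_def)
  then have "action_at s1 s2 eps n = threshold_strategy v w Om T (observe j eps (run s1 s2 eps n))"
    using threshold by (simp add: action_at_step[of s1 s2 eps n])
  moreover have "a_type (action_at s1 s2 eps n) = Propose"
    using agree k by (simp add: agree_at_def)
  ultimately show ?thesis
    using same Om threshold_strategy_proposes by metis
qed

lemma pareto_optimal_swap: "pareto_optimal Om u1 u2 w \<longleftrightarrow> pareto_optimal Om u2 u1 w"
  by (auto simp: pareto_optimal_def dominates_def)

lemma pareto_optimal_le:
  assumes "pareto_optimal Om u1 u2 w" and "x \<in> Om" and "u2 w \<le> u2 x"
  shows "u1 x \<le> u1 w"
  using assms by (force simp: pareto_optimal_def dominates_def)

lemma payoff_against_threshold_strategy:
  assumes j: "j \<in> {1, 2}"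
    and threshold: "strategy_of s1 s2 j = threshold_strategy v w Om T"
    and legal: "legal_strategy Om T (3 - j) (strategy_of s1 s2 (3 - j))"
    and pareto: "pareto_optimal Om u v w" and "w \<in> Om" and "rv \<le> u w"
  shows "payoff u rv s1 s2 T eps \<le> u w \<and> payoff u rv s1 s2 T eps \<in> insert rv (u ` Om)"
proof (cases rule: payoff_cases[of u rv s1 s2 T eps])
  case (2 k)
  then show ?thesis
    using agreement_acceptable_to_threshold_agent[OF _ j threshold legal] pareto_optimal_le[OF pareto]
    by (metis image_eqI insertI2 order_refl)
qed (use \<open>rv \<le> u w\<close> in simp)

lemma (in prob_space) integral_le_const_finite_range:
  fixes f :: "'a \<Rightarrow> real"
  assumes "f \<in> borel_measurable M" and "finite S" and "\<And>x. f x \<in> S" and "\<And>x. f x \<le> c"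
  shows "(\<integral>x. f x \<partial>M) \<le> c"
proof (rule integral_le_const)
  show "integrable M f"
    using assms(1-3) by (intro integrable_const_bound[where B = "Max (abs ` S)"]) auto
qed (use assms(4) in simp)

text \<open>Under the threshold pair agent 1 proposes w at time 0, and agent 2, receiving it at
time eps 0, accepts at (eps 0 + T) / 2; the acceptance arrives at that time plus eps 1.\<close>
definition timely_acceptance :: "real \<Rightarrow> (nat \<Rightarrow> real) \<Rightarrow> bool" where
  "timely_acceptance T eps \<longleftrightarrow> eps 0 < T \<and> (max (eps 0) 0 + T) / 2 + eps 1 < T"

lemma threshold_pair_actions:
  fixes u1 u2 :: "'a \<Rightarrow> real" and T :: real
  assumes "w \<in> Om"
  defines "s1 \<equiv> threshold_strategy u1 w Om T" and "s2 \<equiv> threshold_strategy u2 w Om T"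
  shows "action_at s1 s2 eps 0 = (Propose, w, 0)"
    and "action_at s1 s2 eps 1 = (Accept, w, (max (eps 0) 0 + T) / 2)"
proof -
  show "action_at s1 s2 eps 0 = (Propose, w, 0)"
    by (simp add: action_at_step strategy_of_def agent_of_def observe_def s1_def threshold_strategy_def)
  then have "run s1 s2 eps 1 = [(Propose, w, 0)]"
    by (simp add: action_at_def)
  then have "action_at s1 s2 eps 1 = s2 (observe 2 eps [(Propose, w, 0)])"
    using action_at_step[of s1 s2 eps 1] by (simp add: strategy_of_def agent_of_def)
  then show "action_at s1 s2 eps 1 = (Accept, w, (max (eps 0) 0 + T) / 2)"
    using assms(1)
    by (simp add: observe_def agent_of_def s2_def threshold_strategy_def a_type_def a_offer_def a_time_def)
qed

lemma agree_at_threshold_pair_iff: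
  assumes "w \<in> Om"
  shows "agree_at (threshold_strategy u1 w Om T) (threshold_strategy u2 w Om T) eps T k \<longleftrightarrow>
           k = 1 \<and> timely_acceptance T eps"
proof
  assume agree: "agree_at (threshold_strategy u1 w Om T) (threshold_strategy u2 w Om T) eps T k"
  note actions = threshold_pair_actions[OF assms, of u1 T u2 eps]
  have "k \<noteq> 0"
    using agree actions(1) by (cases k) (auto simp: agree_at_def a_type_def)
  moreover have "\<not> 1 < k"
    using agree actions(2) unfolding agree_at_def by (auto simp: a_type_def)
  ultimately have "k = 1"
    by simp
  then show "k = 1 \<and> timely_acceptance T eps"
    using agree actions by (auto simp: agree_at_def timely_acceptance_def a_time_def)
next
  assume "k = 1 \<and> timely_acceptance T eps"
  then show "agree_at (threshold_strategy u1 w Om T) (threshold_strategy u2 w Om T) eps T k"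
    using threshold_pair_actions[OF assms, of u1 T u2 eps]
    by (auto simp: agree_at_def timely_acceptance_def a_type_def a_time_def)
qed

lemma payoff_threshold_pair:
  assumes "w \<in> Om"
  shows "payoff u rv (threshold_strategy u1 w Om T) (threshold_strategy u2 w Om T) T eps =
           (if timely_acceptance T eps then u w else rv)"
proof (cases "timely_acceptance T eps")
  case True
  then have "agree_at (threshold_strategy u1 w Om T) (threshold_strategy u2 w Om T) eps T 1"
    using agree_at_threshold_pair_iff[OF assms] by blast
  then show ?thesis
    using True threshold_pair_actions(2)[OF assms] by (simp add: payoff_agree_at a_offer_def)
qed (use agree_at_threshold_pair_iff[OF assms] in \<open>simp add: payoff_def\<close>)

lemma agreed_on_threshold_pair:
  assumes "w \<in> Om" and "timely_acceptance T eps"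
  shows "agreed_on (threshold_strategy u1 w Om T) (threshold_strategy u2 w Om T) eps T w"
  using assms agree_at_threshold_pair_iff[OF assms(1)] threshold_pair_actions(2)[OF assms(1)]
  unfolding agreed_on_def by (auto simp: a_offer_def)

lemma pred_timely_acceptance:
  assumes "sets M = sets (\<Pi>\<^sub>M j\<in>(UNIV :: nat set). (borel :: real measure))"
  shows "Measurable.pred M (timely_acceptance T)"
proof -
  have [measurable]: "(\<lambda>eps. eps j) \<in> borel_measurable M" for j
    unfolding measurable_cong_sets[OF assms refl] by measurable
  show ?thesis
    unfolding timely_acceptance_def by measurable
qed

lemma AE_timely_acceptance:
  assumes "AE eps in M. \<forall>j. 0 < eps j \<and> eps j \<le> Delta" and "3 * Delta < T"
  shows "AE eps in M. timely_acceptance T eps"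
proof (rule eventually_mono[OF assms(1)])
  fix eps :: "nat \<Rightarrow> real"
  assume "\<forall>j. 0 < eps j \<and> eps j \<le> Delta"
  then have "0 < eps 0" and "eps 0 \<le> Delta" and "eps 1 \<le> Delta"
    by auto
  then show "timely_acceptance T eps"
    using assms(2) by (auto simp: timely_acceptance_def max_def field_simps)
qed

lemma expected_payoff_against_threshold_strategy:
  assumes "prob_space M"
    and "j \<in> {1, 2}"
    and "strategy_of s1 s2 j = threshold_strategy v w Om T"
    and "legal_strategy Om T (3 - j) (strategy_of s1 s2 (3 - j))"
    and "pareto_optimal Om u v w" and "w \<in> Om" and "rv \<le> u w" and "finite Om"
    and "payoff u rv s1 s2 T \<in> borel_measurable M"
  shows "(\<integral>eps. payoff u rv s1 s2 T eps \<partial>M) \<le> u w"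
proof (rule prob_space.integral_le_const_finite_range[OF assms(1)])
  fix eps
  have "payoff u rv s1 s2 T eps \<le> u w \<and> payoff u rv s1 s2 T eps \<in> insert rv (u ` Om)"
    using assms(2-7) by (rule payoff_against_threshold_strategy)
  then show "payoff u rv s1 s2 T eps \<le> u w" and "payoff u rv s1 s2 T eps \<in> insert rv (u ` Om)"
    by simp_all
qed (use assms(8,9) in simp_all)

lemma nash_equilibrium_threshold_pair:
  assumes M: "prob_space M" and fin: "finite Om" and w: "w \<in> Om" and "0 \<le> T"
    and pareto: "pareto_optimal Om u1 u2 w" and rv1: "rv1 \<le> u1 w" and rv2: "rv2 \<le> u2 w"
    and timely_pred: "Measurable.pred M (timely_acceptance T)"
    and timely: "AE eps in M. timely_acceptance T eps"
  shows "nash_equilibrium Om T M u1 u2 rv1 rv2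
           (threshold_strategy u1 w Om T) (threshold_strategy u2 w Om T)"
proof -
  interpret prob_space M by (rule M)
  define s1 where "s1 = threshold_strategy u1 w Om T"
  define s2 where "s2 = threshold_strategy u2 w Om T"
  have legal: "legal_strategy Om T 1 s1" "legal_strategy Om T 2 s2"
    unfolding s1_def s2_def using legal_threshold_strategy[OF w \<open>0 \<le> T\<close>] by blast+
  have payoff: "payoff u rv s1 s2 T = (\<lambda>eps. if timely_acceptance T eps then u w else rv)"
    for u :: "'a \<Rightarrow> real" and rv
    unfolding s1_def s2_def using payoff_threshold_pair[OF w] by blast
  have payoff_measurable: "payoff u rv s1 s2 T \<in> borel_measurable M" for u rv
    unfolding payoff using timely_pred by measurable
  have expected_payoff: "(\<integral>eps. payoff u rv s1 s2 T eps \<partial>M) = u w" for u rv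
  proof -
    have "AE eps in M. payoff u rv s1 s2 T eps = u w"
      using timely unfolding payoff by eventually_elim simp
    then have "(\<integral>eps. payoff u rv s1 s2 T eps \<partial>M) = (\<integral>eps. u w \<partial>M)"
      using payoff_measurable by (intro integral_cong_AE) auto
    then show ?thesis
      by (simp add: prob_space)
  qed
  have "(\<integral>eps. payoff u1 rv1 s1' s2 T eps \<partial>M) \<le> u1 w"
    if "legal_strategy Om T 1 s1'" and "payoff u1 rv1 s1' s2 T \<in> borel_measurable M" for s1'
    using that M pareto fin w rv1
    by (intro expected_payoff_against_threshold_strategy[where j = 2 and v = u2])
      (simp_all add: strategy_of_def s2_def)
  moreover have "(\<integral>eps. payoff u2 rv2 s1 s2' T eps \<partial>M) \<le> u2 w"
    if "legal_strategy Om T 2 s2'" and "payoff u2 rv2 s1 s2' T \<in> borel_measurable M" for s2'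
    using that M pareto fin w rv2
    by (intro expected_payoff_against_threshold_strategy[where j = 1 and v = u1])
      (simp_all add: strategy_of_def s1_def pareto_optimal_swap)
  ultimately show ?thesis
    unfolding nash_equilibrium_def s1_def[symmetric] s2_def[symmetric]
    using legal payoff_measurable expected_payoff by simp
qed

theorem mainTheorem1:
  fixes Om :: "'a set" and u1 u2 :: "'a \<Rightarrow> real" and rv1 rv2 :: real
    and M :: "(nat \<Rightarrow> real) measure"
  assumes "finite Om"
    and "prob_space M"
    and "sets M = sets (\<Pi>\<^sub>M j\<in>(UNIV :: nat set). (borel :: real measure))"
    and "\<exists>Delta. AE eps in M. \<forall>j. 0 < eps j \<and> eps j \<le> Delta"
  shows "\<exists>T0. \<forall>T \<ge> T0. \<forall>w \<in> Om.
           pareto_optimal Om u1 u2 w \<and> individually_rational u1 u2 rv1 rv2 w \<longrightarrow>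
           (\<exists>s1 s2. nash_equilibrium Om T M u1 u2 rv1 rv2 s1 s2 \<and>
              (AE eps in M. \<exists>w'\<in>Om. agreed_on s1 s2 eps T w' \<and>
                                     u1 w' = u1 w \<and> u2 w' = u2 w))"
proof -
  obtain Delta where delays: "AE eps in M. \<forall>j. 0 < eps j \<and> eps j \<le> Delta"
    using assms(4) by blast
  show ?thesis
  proof (intro exI[of _ "3 * \<bar>Delta\<bar> + 1"] allI impI ballI exI conjI)
    fix T w
    assume T: "3 * \<bar>Delta\<bar> + 1 \<le> T" and w: "w \<in> Om"
      and "pareto_optimal Om u1 u2 w \<and> individually_rational u1 u2 rv1 rv2 w"
    then have pareto: "pareto_optimal Om u1 u2 w" and "rv1 \<le> u1 w" and "rv2 \<le> u2 w"
      by (auto simp: individually_rational_def)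
    have timely: "AE eps in M. timely_acceptance T eps"
      using T by (intro AE_timely_acceptance[OF delays]) auto
    show "nash_equilibrium Om T M u1 u2 rv1 rv2
            (threshold_strategy u1 w Om T) (threshold_strategy u2 w Om T)"
      using T by (intro nash_equilibrium_threshold_pair pred_timely_acceptance assms w pareto
          \<open>rv1 \<le> u1 w\<close> \<open>rv2 \<le> u2 w\<close> timely) auto
    show "AE eps in M. \<exists>w'\<in>Om. agreed_on (threshold_strategy u1 w Om T)
            (threshold_strategy u2 w Om T) eps T w' \<and> u1 w' = u1 w \<and> u2 w' = u2 w"
      using timely by (rule eventually_mono) (use w agreed_on_threshold_pair[OF w] in blast)
  qed
qed

end
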